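(* Let $H$ be a real Hilbert space, $m\ge1$ an integer, and let $g_m(\alpha,H)$ denote either $\gamma_m(\alpha,H)$ (for the Pure Greedy Algorithm) or $\gamma^o_m(\alpha,H)$ (for the Orthogonal Greedy Algorithm). Suppose that for some $\beta\in(0,1]$, some $C>0$ and some $\varphi(m)>0$ we have $g_m(\beta,H)\le C\varphi(m)^{-\beta/2}$. Then for every $\alpha\in(0,\beta)$, $$ g_m(\alpha,H)\le C^{\alpha/\beta}\varphi(m)^{-\alpha/2}.$$
   Context: A (symmetric) dictionary in $H$ is a set $\mathcal D$ of unit vectors with dense span and $g\in\mathcal D\Rightarrow -g\in\mathcal D$. $A_1(\mathcal D)$ is the closed convex hull of $\mathcal D$ and $\|f\|_{A_1(\mathcal D)}:=\inf\{M:f/M\in A_1(\mathcal D)\}$. For $f\in H$, $g(f)\in\mathcal D$ denotes an element maximizing $\langle f,g\rangle$ over $g\in\mathcal D$ (assumed to exist). PGA: $f_0:=f$, $G_0:=0$, $G_m(f,\mathcal D):=G_{m-1}(f,\mathcal D)+\langle f_{m-1},g(f_{m-1})\rangle g(f_{m-1})$, $f_m:=f-G_m(f,\mathcal D)$. OGA: $f^o_0:=f$, $G^o_m(f,\mathcal D)$ is the orthogonal projection of $f$ onto $\operatorname{span}\{g(f^o_0),\dots,g(f^o_{m-1})\}$, $f^o_m:=f-G^o_m(f,\mathcal D)$. For $\alpha\in(0,1]$, $\gamma_m(\alpha,H):=\sup \frac{\|f-G_m(f,\mathcal D)\|}{\|f\|^{1-\alpha}\|f\|^{\alpha}_{A_1(\mathcal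 D)}}$, the supremum over all dictionaries $\mathcal D$, all $f\neq0$ with $\|f\|_{A_1(\mathcal D)}<\infty$ and all possible realizations of $G_m(f,\mathcal D)$; $\gamma^o_m(\alpha,H)$ is defined the same way with $G^o_m$ in place of $G_m$. *)

theory Defs
  imports "HOL-Analysis.Analysis"
begin

definition dictionary :: "'a::real_inner set \<Rightarrow> bool" where
  "dictionary D \<longleftrightarrow> (\<forall>g\<in>D. norm g = 1) \<and> closure (span D) = UNIV \<and> (\<forall>g\<in>D. - g \<in> D)"

definition A1 :: "'a::real_inner set \<Rightarrow> 'a set" where
  "A1 D = closure (convex hull D)"

text \<open>The A_1(D) norm; infinite if no admissible M exists.\<close>
definition A1_norm :: "'a::real_inner set \<Rightarrow> 'a \<Rightarrow> ereal" where
  "A1_norm D f = Inf (ereal ` {M::real. M > 0 \<and> (1 / M) *\<^sub>R f \<in> A1 D})"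

definition orth_proj :: "'a::real_inner set \<Rightarrow> 'a \<Rightarrow> 'a" where
  "orth_proj V f = (THE p. p \<in> V \<and> (\<forall>v\<in>V. inner (f - p) v = 0))"

datatype greedy_alg = PGA | OGA

fun pga_res :: "'a::real_inner \<Rightarrow> (nat \<Rightarrow> 'a) \<Rightarrow> nat \<Rightarrow> 'a" where
  "pga_res f gs 0 = f"
| "pga_res f gs (Suc k) = pga_res f gs k - inner (pga_res f gs k) (gs k) *\<^sub>R gs k"

definition oga_res :: "'a::real_inner \<Rightarrow> (nat \<Rightarrow> 'a) \<Rightarrow> nat \<Rightarrow> 'a" where
  "oga_res f gs k = f - orth_proj (span (gs ` {..<k})) f"

fun residual :: "greedy_alg \<Rightarrow> 'a::real_inner \<Rightarrow> (nat \<Rightarrow> 'a) \<Rightarrow> nat \<Rightarrow> 'a" where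
  "residual PGA f gs k = pga_res f gs k"
| "residual OGA f gs k = oga_res f gs k"

definition greedy_choice :: "'a::real_inner set \<Rightarrow> 'a \<Rightarrow> 'a \<Rightarrow> bool" where
  "greedy_choice D r g \<longleftrightarrow> g \<in> D \<and> (\<forall>h\<in>D. inner r h \<le> inner r g)"

definition realization :: "greedy_alg \<Rightarrow> 'a::real_inner set \<Rightarrow> 'a \<Rightarrow> (nat \<Rightarrow> 'a) \<Rightarrow> nat \<Rightarrow> bool" where
  "realization alg D f gs m \<longleftrightarrow> (\<forall>k<m. greedy_choice D (residual alg f gs k) (gs k))"

text \<open>gamma_m(alpha,H) (alg = PGA) and gamma^o_m(alpha,H) (alg = OGA), H given by the type 'a.\<close>
definition gamma :: "'a::{real_inner,complete_space} itself \<Rightarrow> greedy_alg \<Rightarrow> nat \<Rightarrow> real \<Rightarrow> ereal" where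
  "gamma _ alg m \<alpha> = (SUP x \<in> {(D, f, gs). dictionary (D::'a set) \<and> f \<noteq> 0 \<and> A1_norm D f < \<infinity>
                                  \<and> realization alg D f gs m}.
      (case x of (D, f, gs) \<Rightarrow>
        ereal (norm (residual alg f gs m) /
               (norm f powr (1 - \<alpha>) * real_of_ereal (A1_norm D f) powr \<alpha>))))"

end

theory Submission
  imports Defs
begin

text \<open>Each residual has the form \<open>x - p\<close> with \<open>p\<close> orthogonal to \<open>x - p\<close> (\<open>x = f\<close> for the OGA,
  \<open>x\<close> the previous residual for the PGA), so residual norms never exceed \<open>norm f\<close>. Interpolating
  between this trivial bound and the hypothesis \<open>norm f\<^sub>m \<le> K * norm f\<^bsup>1-\<beta>\<^esup> * N\<^bsup>\<beta>\<^esup>\<close>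
  (\<open>N\<close> the \<open>A\<^sub>1\<close>-norm of \<open>f\<close>) via \<open>r \<le> min A B \<Longrightarrow> r \<le> A\<^bsup>1-t\<^esup> * B\<^bsup>t\<^esup>\<close> with
  \<open>t = \<alpha>/\<beta>\<close> yields the same bound for \<open>\<alpha>\<close> with constant \<open>K\<^bsup>\<alpha>/\<beta>\<^esup>\<close>.\<close>

lemma orthogonal_projection_onto_finite_span_exists:
  fixes S :: "'a::real_inner set"
  assumes "finite S"
  shows "\<exists>p\<in>span S. \<forall>v\<in>span S. orthogonal (f - p) v"
  using assms
proof (induction arbitrary: f)
  case empty
  then show ?case by (simp add: orthogonal_clauses)
next
  case (insert a S)
  obtain p where p: "p \<in> span S" "\<forall>v\<in>span S. orthogonal (f - p) v"
    using insert.IH by blast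
  obtain q where q: "q \<in> span S" "\<forall>v\<in>span S. orthogonal (a - q) v"
    using insert.IH by blast
  define a' where "a' = a - q"
  \<comment> \<open>If \<open>a' = 0\<close>, the junk value of the division makes \<open>p' = p\<close>, which is then correct.\<close>
  define p' where "p' = p + (inner (f - p) a' / inner a' a') *\<^sub>R a'"
  have p'_span: "p' \<in> span (insert a S)"
    unfolding p'_def a'_def using p(1) q(1)
    by (meson span_add span_diff span_scale span_base insertI1 span_mono subset_insertI subsetD)
  have orth_S: "orthogonal (f - p') w" if "w \<in> span S" for w
    using p(2) q(2) that unfolding p'_def a'_def orthogonal_def
    by (simp add: inner_diff_left inner_add_left)
  have "orthogonal (f - p') a'"
    unfolding p'_def orthogonal_def
    by (cases "a' = 0") (simp_all add: inner_diff_left inner_add_left)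
  then have orth_a: "orthogonal (f - p') a"
    using orth_S q(1) by (metis a'_def diff_add_cancel orthogonal_clauses(4))
  have "\<forall>v\<in>span (insert a S). orthogonal (f - p') v"
    using orth_S orth_a by (metis insert_iff orthogonal_to_span span_base)
  then show ?case
    using p'_span by blast
qed

lemma orth_proj_finite_span:
  fixes S :: "'a::real_inner set"
  assumes "finite S"
  shows "orth_proj (span S) f \<in> span S \<and> (\<forall>v\<in>span S. inner (f - orth_proj (span S) f) v = 0)"
  unfolding orth_proj_def
proof (rule theI')
  show "\<exists>!p. p \<in> span S \<and> (\<forall>v\<in>span S. inner (f - p) v = 0)"
  proof (rule ex_ex1I)
    show "\<exists>p. p \<in> span S \<and> (\<forall>v\<in>span S. inner (f - p) v = 0)"
      using orthogonal_projection_onto_finite_span_exists[OF assms, of f]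
      by (auto simp: orthogonal_def)
  next
    fix p q
    assume p: "p \<in> span S \<and> (\<forall>v\<in>span S. inner (f - p) v = 0)"
      and q: "q \<in> span S \<and> (\<forall>v\<in>span S. inner (f - q) v = 0)"
    then have "p - q \<in> span S"
      by (simp add: span_diff)
    then have "inner (f - q) (p - q) - inner (f - p) (p - q) = 0"
      using p q by simp
    then have "inner (p - q) (p - q) = 0"
      by (simp add: inner_diff_left inner_diff_right)
    then show "p = q" by simp
  qed
qed

lemma norm_diff_orthogonal_le:
  fixes f p :: "'a::real_inner"
  assumes "inner (f - p) p = 0"
  shows "norm (f - p) \<le> norm f"
proof -
  have "(norm f)\<^sup>2 = (norm (f - p))\<^sup>2 + (norm p)\<^sup>2"
    using norm_add_Pythagorean[of "f - p" p] assms by (simp add: orthogonal_def)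
  then have "(norm (f - p))\<^sup>2 \<le> (norm f)\<^sup>2"
    by simp
  then show ?thesis
    by (rule power2_le_imp_le) simp
qed

lemma norm_oga_res_le: "norm (oga_res f gs k) \<le> norm f"
proof -
  let ?V = "span (gs ` {..<k})"
  have "orth_proj ?V f \<in> ?V \<and> (\<forall>v\<in>?V. inner (f - orth_proj ?V f) v = 0)"
    by (rule orth_proj_finite_span) simp
  then show ?thesis
    unfolding oga_res_def by (blast intro: norm_diff_orthogonal_le)
qed

lemma norm_pga_res_le:
  assumes "\<forall>j<k. norm (gs j) = 1"
  shows "norm (pga_res f gs k) \<le> norm f"
  using assms
proof (induction k)
  case 0
  then show ?case by simp
next
  case (Suc k)
  let ?x = "pga_res f gs k" and ?g = "gs k"
  have "inner ?g ?g = 1"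
    using Suc.prems by (simp add: norm_eq_1)
  then have "inner (?x - inner ?x ?g *\<^sub>R ?g) (inner ?x ?g *\<^sub>R ?g) = 0"
    by (simp add: inner_diff_left)
  then have "norm (pga_res f gs (Suc k)) \<le> norm ?x"
    by (simp add: norm_diff_orthogonal_le)
  also have "\<dots> \<le> norm f"
    using Suc by simp
  finally show ?case .
qed

lemma norm_residual_le:
  assumes "realization alg D f gs m" and "dictionary D"
  shows "norm (residual alg f gs m) \<le> norm f"
proof (cases alg)
  case PGA
  have "\<forall>k<m. norm (gs k) = 1"
    using assms unfolding realization_def greedy_choice_def dictionary_def by simp
  then show ?thesis
    using PGA norm_pga_res_le by simp
next
  case OGA
  then show ?thesis
    using norm_oga_res_le by simp
qed

lemma A1_norm_nonneg: "A1_norm D f \<ge> 0"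
  unfolding A1_norm_def by (rule Inf_greatest) auto

lemma gamma_le_ereal_iff:
  "gamma TYPE('a::{real_inner,complete_space}) alg m \<alpha> \<le> ereal c \<longleftrightarrow>
    (\<forall>(D::'a set) f gs. dictionary D \<and> f \<noteq> 0 \<and> A1_norm D f < \<infinity> \<and> realization alg D f gs m \<longrightarrow>
      norm (residual alg f gs m) / (norm f powr (1 - \<alpha>) * real_of_ereal (A1_norm D f) powr \<alpha>) \<le> c)"
  unfolding gamma_def by (auto simp: SUP_le_iff)

lemma le_powr_interpolate:
  fixes r A B t :: real
  assumes "0 \<le> r" "r \<le> A" "r \<le> B" "0 \<le> t" "t \<le> 1"
  shows "r \<le> A powr (1 - t) * B powr t"
proof (cases "r = 0")
  case False
  then have "r = r powr (1 - t) * r powr t"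
    using assms(1) by (simp add: powr_add [symmetric])
  also have "\<dots> \<le> A powr (1 - t) * B powr t"
    using assms False by (intro mult_mono powr_mono2) auto
  finally show ?thesis .
qed simp

lemma residual_ratio_interpolate:
  fixes r F N K \<alpha> \<beta> :: real
  assumes "0 \<le> r" "r \<le> F" "0 \<le> N" "0 < K"
    and ratio: "r / (F powr (1 - \<beta>) * N powr \<beta>) \<le> K"
    and "0 < \<beta>" "0 \<le> \<alpha>" "\<alpha> \<le> \<beta>"
  shows "r / (F powr (1 - \<alpha>) * N powr \<alpha>) \<le> K powr (\<alpha> / \<beta>)"
proof (cases "r = 0 \<or> N = 0")
  case False
  define t where "t = \<alpha> / \<beta>"
  have t: "0 \<le> t" "t \<le> 1" "\<beta> * t = \<alpha>"
    using assms by (auto simp: t_def)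
  have pos: "0 < F" "0 < N"
    using assms False by auto
  have "r \<le> K * (F powr (1 - \<beta>) * N powr \<beta>)"
    using ratio pos by (simp add: divide_le_eq mult.commute)
  then have "r \<le> F powr (1 - t) * (K * (F powr (1 - \<beta>) * N powr \<beta>)) powr t"
    using assms t by (intro le_powr_interpolate) auto
  also have "\<dots> = K powr t * (F powr (1 - t + (1 - \<beta>) * t) * N powr (\<beta> * t))"
    using pos assms by (simp add: powr_mult powr_powr powr_add mult_ac)
  also have "\<dots> = K powr t * (F powr (1 - \<alpha>) * N powr \<alpha>)"
    using t by (simp add: algebra_simps)
  finally show ?thesis
    using pos by (simp add: t_def divide_le_eq mult.commute)
qed (use assms in auto)

theorem lemma2p2:
  fixes alg :: greedy_alg and m :: nat and \<alpha> \<beta> C \<phi>m :: real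
  assumes "m \<ge> 1" and "0 < \<beta>" and "\<beta> \<le> 1" and "C > 0" and "\<phi>m > 0"
    and "gamma TYPE('a::{real_inner,complete_space}) alg m \<beta> \<le> ereal (C * \<phi>m powr (- \<beta> / 2))"
    and "0 < \<alpha>" and "\<alpha> < \<beta>"
  shows "gamma TYPE('a) alg m \<alpha> \<le> ereal (C powr (\<alpha> / \<beta>) * \<phi>m powr (- \<alpha> / 2))"
proof -
  define K where "K = C * \<phi>m powr (- \<beta> / 2)"
  have "K > 0"
    using assms by (simp add: K_def)
  have K_powr: "K powr (\<alpha> / \<beta>) = C powr (\<alpha> / \<beta>) * \<phi>m powr (- \<alpha> / 2)"
    using assms unfolding K_def by (simp add: powr_mult powr_powr)
  have bound_\<beta>: "\<forall>(D::'a set) f gs. dictionary D \<and> f \<noteq> 0 \<and> A1_norm D f < \<infinity> \<and> realization alg D f gs m \<longrightarrow>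
      norm (residual alg f gs m) / (norm f powr (1 - \<beta>) * real_of_ereal (A1_norm D f) powr \<beta>) \<le> K"
    using assms(6) unfolding K_def gamma_le_ereal_iff .
  show ?thesis
    unfolding gamma_le_ereal_iff K_powr [symmetric]
  proof (intro allI impI, elim conjE)
    fix D :: "'a set" and f gs
    assume admissible: "dictionary D" "f \<noteq> 0" "A1_norm D f < \<infinity>" "realization alg D f gs m"
    have "0 \<le> real_of_ereal (A1_norm D f)"
      using A1_norm_nonneg by (rule real_of_ereal_pos)
    then show "norm (residual alg f gs m) / (norm f powr (1 - \<alpha>) * real_of_ereal (A1_norm D f) powr \<alpha>)
        \<le> K powr (\<alpha> / \<beta>)"
      using bound_\<beta> admissible norm_residual_le[OF admissible(4,1)] \<open>K > 0\<close> assms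
      by (intro residual_ratio_interpolate) auto
  qed
qed

end
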